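(* Let $n\ge3$. There exists a quasi-metric $\rho$ on $[n]$ such that the Kantorovich-Rubinstein polytope $$KR(\rho)=\mathrm{Conv}\Big\{\frac{e_i-e_j}{\rho(i,j)}:1\le i\neq j\le n\Big\}$$ is affinely isomorphic to the polar dual $W_n^\circ$ of the cyclohedron $W_n$. Moreover $\rho$ satisfies the strict triangle inequality $\rho(i,k)<\rho(i,j)+\rho(j,k)$ whenever $i,j,k$ are pairwise distinct.
   Context: A quasi-metric on a finite set $X$ is $\rho:X\times X\to\mathbb{R}_{\ge0}$ with $\rho(x,y)=0\iff x=y$ and $\rho(x,z)\le\rho(x,y)+\rho(y,z)$; symmetry is not required. Realization of the cyclohedron: let $\mathrm{Con}(C_n)$ be the family consisting of $[n]$ and all nonempty proper cyclic intervals $\{i,i+1,\dots,j\}$ of $[n]$ (indices mod $n$), $\Delta_X=\mathrm{Conv}\{e_i:i\in X\}$, and $W_n=\sum_{X\in\mathrm{Con}(C_n)}\Delta_X\subset\{x:\sum x_i=N\}$, $N=|\mathrm{Con}(C_n)|=n^2-n+1$. Translate $W_n$ by $-\frac Nn(1,\dots,1)$ into $H_0=\{x:\sum x_i=0\}$ (the origin then lies in its relative interior) and let $W_n^\circ=\{y\in H_0:\langle y,x\rangle\le 1 \text{ for all } x \text{ in the translate}\}$ be its polar inside $H_0$. *)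

theory Defs
  imports "HOL-Analysis.Analysis" "HOL-Library.Function_Algebras"
begin

(* Vectors of R^n are represented as functions nat => real; coordinates are
   indexed by {0..<n} (i.e. [n] relabelled by i |-> i-1). *)

instantiation "fun" :: (type, real_vector) real_vector
begin
definition scaleR_fun :: "real \<Rightarrow> ('a \<Rightarrow> 'b) \<Rightarrow> 'a \<Rightarrow> 'b"
  where "scaleR_fun r f = (\<lambda>x. r *\<^sub>R f x)"
instance
  by standard (simp_all add: scaleR_fun_def fun_eq_iff scaleR_add_right scaleR_add_left)
end

definition unitv :: "nat \<Rightarrow> nat \<Rightarrow> real" where
  "unitv i = (\<lambda>j. if j = i then 1 else 0)"

definition quasi_metric_on :: "nat \<Rightarrow> (nat \<Rightarrow> nat \<Rightarrow> real) \<Rightarrow> bool" where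
  "quasi_metric_on n \<rho> \<longleftrightarrow>
     (\<forall>x<n. \<forall>y<n. \<rho> x y \<ge> 0 \<and> (\<rho> x y = 0 \<longleftrightarrow> x = y)) \<and>
     (\<forall>x<n. \<forall>y<n. \<forall>z<n. \<rho> x z \<le> \<rho> x y + \<rho> y z)"

definition KR :: "nat \<Rightarrow> (nat \<Rightarrow> nat \<Rightarrow> real) \<Rightarrow> (nat \<Rightarrow> real) set" where
  "KR n \<rho> = convex hull {(1 / \<rho> i j) *\<^sub>R (unitv i - unitv j) | i j. i < n \<and> j < n \<and> i \<noteq> j}"

definition cyc_interval :: "nat \<Rightarrow> nat \<Rightarrow> nat \<Rightarrow> nat set" where
  "cyc_interval n i l = {(i + k) mod n | k. k \<le> l}"

definition Con_cycle :: "nat \<Rightarrow> nat set set" where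
  "Con_cycle n = insert {..<n} {cyc_interval n i l | i l. i < n \<and> l + 1 < n}"

definition simplex_face :: "nat set \<Rightarrow> (nat \<Rightarrow> real) set" where
  "simplex_face X = convex hull (unitv ` X)"

text \<open>The cyclohedron W_n as Minkowski sum of the simplices Delta_X, X in Con(C_n).\<close>
definition cyclohedron :: "nat \<Rightarrow> (nat \<Rightarrow> real) set" where
  "cyclohedron n = {x. \<exists>p. (\<forall>X\<in>Con_cycle n. p X \<in> simplex_face X) \<and> x = (\<Sum>X\<in>Con_cycle n. p X)}"

definition cyclohedron_centered :: "nat \<Rightarrow> (nat \<Rightarrow> real) set" where
  "cyclohedron_centered n =
     (\<lambda>x. x - (real (card (Con_cycle n)) / real n) *\<^sub>R (\<lambda>j. if j < n then 1 else 0)) ` cyclohedron n"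

definition H0 :: "nat \<Rightarrow> (nat \<Rightarrow> real) set" where
  "H0 n = {y. (\<forall>j\<ge>n. y j = 0) \<and> (\<Sum>j<n. y j) = 0}"

definition cyclohedron_polar :: "nat \<Rightarrow> (nat \<Rightarrow> real) set" where
  "cyclohedron_polar n =
     {y \<in> H0 n. \<forall>x\<in>cyclohedron_centered n. (\<Sum>j<n. y j * x j) \<le> 1}"

definition affinely_isomorphic :: "('a::real_vector) set \<Rightarrow> ('b::real_vector) set \<Rightarrow> bool" where
  "affinely_isomorphic P Q \<longleftrightarrow>
     (\<exists>L b. linear L \<and> inj_on (\<lambda>x. L x + b) (affine hull P) \<and> (\<lambda>x. L x + b) ` P = Q)"

end

theory Submission
  imports Defs
begin

text \<open>
  In \<open>H\<^sub>0\<close> the polar of the centred cyclohedron is \<open>{y. h y \<le> 1}\<close>, where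
  \<open>h y = (\<Sum>X\<in>Con(C\<^sub>n). max\<^sub>X y)\<close> is the support function of \<open>W\<^sub>n\<close>.
  Let \<open>L\<close> be the linear bijection of \<open>H\<^sub>0\<close> inverting the cyclic difference operator,
  \<open>(L z)\<^sub>k - (L z)\<^sub>k\<^sub>-\<^sub>1 = - z\<^sub>k\<close>, and put \<open>w\<^sub>i\<^sub>j = L (e\<^sub>i - e\<^sub>j)\<close> and \<open>\<rho>(i,j) = h w\<^sub>i\<^sub>j\<close>.
  Then \<open>L\<close> maps \<open>KR(\<rho>)\<close> onto \<open>conv {w\<^sub>i\<^sub>j / h w\<^sub>i\<^sub>j}\<close>, which lies in \<open>{h \<le> 1}\<close> by sublinearity.
  Conversely every \<open>y \<in> H\<^sub>0\<close> is a nonnegative combination \<open>\<Sum> c\<^sub>i\<^sub>j w\<^sub>i\<^sub>j\<close> with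
  \<open>\<Sum> c\<^sub>i\<^sub>j h w\<^sub>i\<^sub>j \<le> h y\<close>: peel off a multiple of the centred indicator of the complement of the
  minimum level set of \<open>y\<close>, and split that set into maximal cyclic arcs; the centred indicators
  of the complements of arcs are exactly the \<open>w\<^sub>i\<^sub>j\<close>.
  The triangle inequality for \<open>\<rho>\<close> is subadditivity of \<open>h\<close>; it is strict because on the
  interval \<open>{j-1, j}\<close> the vectors \<open>w\<^sub>i\<^sub>j\<close> and \<open>w\<^sub>j\<^sub>k\<close> jump in opposite directions.
\<close>

lemma sum_fun_apply: "(\<Sum>X\<in>C. p X) j = (\<Sum>X\<in>C. p X j :: 'b::comm_monoid_add)"
  by (induction C rule: infinite_finite_induct) auto

lemma sum_mult_sum_apply:
  "(\<Sum>j\<in>J. y j * (\<Sum>X\<in>C. p X) j) = (\<Sum>X\<in>C. \<Sum>j\<in>J. y j * p X j :: 'b::comm_semiring_0)"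
  unfolding sum_fun_apply sum_distrib_left by (rule sum.swap)

lemma scaleR_fun_apply [simp]: "(c *\<^sub>R f) x = c *\<^sub>R f x"
  by (simp add: scaleR_fun_def)

lemma Max_image_add_le:
  fixes f g :: "'a \<Rightarrow> 'b::linordered_ab_group_add"
  assumes "finite X" "X \<noteq> {}"
  shows "Max ((f + g) ` X) \<le> Max (f ` X) + Max (g ` X)"
proof -
  have "f k + g k \<le> Max (f ` X) + Max (g ` X)" if "k \<in> X" for k
    using assms that by (intro add_mono Max_ge) auto
  then show ?thesis using assms by (auto simp: Max_le_iff)
qed

lemma Max_image_scaleR:
  fixes f :: "'a \<Rightarrow> real"
  assumes "finite X" "X \<noteq> {}" "c \<ge> 0"
  shows "Max ((c *\<^sub>R f) ` X) = c * Max (f ` X)"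
proof -
  have "mono ((*) c)" using assms(3) by (simp add: mono_def mult_left_mono)
  then have "c * Max (f ` X) = Max (((*) c) ` f ` X)"
    using assms by (intro mono_Max_commute) auto
  then show ?thesis by (simp add: image_image)
qed

lemma nat_crossing:
  assumes "P a" "\<not> P b" "a < b"
  shows "\<exists>t. a \<le> t \<and> t < b \<and> P t \<and> \<not> P (Suc t)"
  using assms
proof (induction b)
  case (Suc b)
  show ?case
  proof (cases "P b")
    case False
    then have "a < b" using Suc.prems by (cases "a = b") auto
    then show ?thesis using Suc.IH[OF Suc.prems(1) False] by force
  next
    case True
    then show ?thesis using Suc.prems by (intro exI[of _ b]) auto
  qed
qed simp

definition gauge_le :: "'a::real_vector set \<Rightarrow> 'a \<Rightarrow> real \<Rightarrow> bool" where
  "gauge_le K y r \<longleftrightarrow> (\<exists>t k. 0 \<le> t \<and> t \<le> r \<and> k \<in> K \<and> y = t *\<^sub>R k)"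

lemma gauge_le_scaleR_mem: "k \<in> K \<Longrightarrow> 0 \<le> r \<Longrightarrow> gauge_le K (r *\<^sub>R k) r"
  unfolding gauge_le_def by blast

lemma gauge_le_zero: "K \<noteq> {} \<Longrightarrow> 0 \<le> r \<Longrightarrow> gauge_le K 0 r"
  using gauge_le_scaleR_mem[of _ K 0] gauge_le_def by fastforce

lemma gauge_le_mono: "gauge_le K y r \<Longrightarrow> r \<le> s \<Longrightarrow> gauge_le K y s"
  unfolding gauge_le_def by force

lemma gauge_le_scaleR:
  assumes "gauge_le K y r" "0 \<le> c"
  shows "gauge_le K (c *\<^sub>R y) (c * r)"
proof -
  obtain t k where "0 \<le> t" "t \<le> r" "k \<in> K" "y = t *\<^sub>R k"
    using assms(1) unfolding gauge_le_def by blast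
  then show ?thesis unfolding gauge_le_def using assms(2)
    by (intro exI[of _ "c * t"] exI[of _ k]) (auto intro: mult_left_mono)
qed

lemma gauge_le_add:
  assumes "convex K" "gauge_le K a r" "gauge_le K b s"
  shows "gauge_le K (a + b) (r + s)"
proof -
  obtain t k where tk: "0 \<le> t" "t \<le> r" "k \<in> K" "a = t *\<^sub>R k"
    using assms(2) unfolding gauge_le_def by blast
  obtain u l where ul: "0 \<le> u" "u \<le> s" "l \<in> K" "b = u *\<^sub>R l"
    using assms(3) unfolding gauge_le_def by blast
  show ?thesis
  proof (cases "t + u = 0")
    case True
    then have "t = 0" "u = 0" using tk ul by auto
    then have "a + b = 0 *\<^sub>R k" using tk ul by simp
    then show ?thesis using tk ul unfolding gauge_le_def by force
  next
    case False
    then have tu: "t + u > 0" using tk ul by simp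
    define m where "m = (t / (t + u)) *\<^sub>R k + (u / (t + u)) *\<^sub>R l"
    have "m \<in> K" unfolding m_def using tu tk ul
      by (intro convexD[OF assms(1)]) (auto simp: add_divide_distrib[symmetric])
    moreover have "a + b = (t + u) *\<^sub>R m"
      unfolding m_def using tu tk ul by (simp add: scaleR_add_right)
    ultimately show ?thesis unfolding gauge_le_def using tk ul
      by (intro exI[of _ "t + u"] exI[of _ m]) auto
  qed
qed

lemma gauge_le_one_imp_mem:
  assumes "convex K" "0 \<in> K" "gauge_le K y 1"
  shows "y \<in> K"
proof -
  obtain t k where tk: "0 \<le> t" "t \<le> 1" "k \<in> K" "y = t *\<^sub>R k"
    using assms(3) unfolding gauge_le_def by blast
  have "t *\<^sub>R k + (1 - t) *\<^sub>R 0 \<in> K" using tk by (intro convexD[OF assms(1) _ assms(2)]) auto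
  then show ?thesis using tk by simp
qed

lemma H0_add: "a \<in> H0 n \<Longrightarrow> b \<in> H0 n \<Longrightarrow> a + b \<in> H0 n"
  by (simp add: H0_def sum.distrib)

lemma H0_diff: "a \<in> H0 n \<Longrightarrow> b \<in> H0 n \<Longrightarrow> a - b \<in> H0 n"
  by (simp add: H0_def sum_subtractf)

lemma H0_scaleR: "a \<in> H0 n \<Longrightarrow> c *\<^sub>R a \<in> H0 n"
  by (simp add: H0_def sum_distrib_left[symmetric])

lemma affine_H0: "affine (H0 n)"
  unfolding affine_def by (intro ballI allI impI H0_add H0_scaleR)

lemma H0_unitv_diff: "i < n \<Longrightarrow> j < n \<Longrightarrow> unitv i - unitv j \<in> H0 n"
  by (simp add: H0_def unitv_def sum.distrib sum_subtractf)

lemma sum_mult_unitv: "k < n \<Longrightarrow> (\<Sum>j<n. y j * unitv k j) = y k"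
  by (simp add: unitv_def if_distrib cong: if_cong)

lemma H0_sum_shift_const:
  assumes "y \<in> H0 n"
  shows "(\<Sum>j<n. y j * (w - c *\<^sub>R (\<lambda>j. if j < n then 1 else 0)) j) = (\<Sum>j<n. y j * w j)"
proof -
  have "(\<Sum>j<n. y j * (w - c *\<^sub>R (\<lambda>j. if j < n then 1 else 0)) j) = (\<Sum>j<n. y j * w j - c * y j)"
    by (intro sum.cong) (auto simp: algebra_simps)
  also have "\<dots> = (\<Sum>j<n. y j * w j) - c * (\<Sum>j<n. y j)"
    by (simp add: sum_subtractf sum_distrib_left)
  finally show ?thesis using assms by (simp add: H0_def)
qed

lemma simplex_face_sum_mult_le_Max:
  assumes "X \<subseteq> {..<n}" "finite X" "X \<noteq> {}" "p \<in> simplex_face X"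
  shows "(\<Sum>j<n. y j * p j) \<le> Max (y ` X)"
proof -
  let ?S = "{q. (\<Sum>j<n. y j * q j) \<le> Max (y ` X)}"
  have "convex ?S"
    unfolding convex_def
  proof (intro ballI allI impI)
    fix x z :: "nat \<Rightarrow> real" and u v :: real
    assume x: "x \<in> ?S" and z: "z \<in> ?S" and uv: "0 \<le> u" "0 \<le> v" "u + v = 1"
    have "(\<Sum>j<n. y j * (u *\<^sub>R x + v *\<^sub>R z) j) = u * (\<Sum>j<n. y j * x j) + v * (\<Sum>j<n. y j * z j)"
      by (simp add: sum.distrib sum_distrib_left algebra_simps)
    also have "\<dots> \<le> u * Max (y ` X) + v * Max (y ` X)"
      using x z uv by (intro add_mono mult_left_mono) auto
    finally show "u *\<^sub>R x + v *\<^sub>R z \<in> ?S" using uv by (simp add: distrib_right[symmetric])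
  qed
  moreover have "unitv ` X \<subseteq> ?S"
    using assms(1,2) by (auto simp: sum_mult_unitv)
  ultimately have "simplex_face X \<subseteq> ?S"
    unfolding simplex_face_def by (intro hull_minimal)
  then show ?thesis using assms(4) by auto
qed

locale cyclic_index =
  fixes n :: nat
  assumes three_le_n: "3 \<le> n"
begin

lemma n_pos: "0 < n" using three_le_n by simp

lemma mod_add_lt: "i < n \<Longrightarrow> t < n \<Longrightarrow> (i + t) mod n = (if i + t < n then i + t else i + t - n)"
  by (simp add: le_mod_geq)

definition cprev :: "nat \<Rightarrow> nat" where "cprev k = (k + n - 1) mod n"
definition cnext :: "nat \<Rightarrow> nat" where "cnext k = (k + 1) mod n"

lemma cprev_eq: "k < n \<Longrightarrow> cprev k = (if k = 0 then n - 1 else k - 1)"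
  by (cases k) (auto simp: cprev_def)

lemma cnext_eq: "k < n \<Longrightarrow> cnext k = (if k + 1 < n then k + 1 else 0)"
proof (cases "k + 1 < n")
  case False
  assume "k < n"
  with False have "k + 1 = n" by simp
  then show ?thesis by (simp add: cnext_def)
qed (simp add: cnext_def)

lemma cprev_lt: "cprev k < n" using n_pos by (simp add: cprev_def)
lemma cnext_lt: "cnext k < n" using n_pos by (simp add: cnext_def)

lemma cnext_cprev: "k < n \<Longrightarrow> cnext (cprev k) = k"
  using three_le_n by (simp add: cprev_eq cnext_eq)

lemma cprev_cnext: "k < n \<Longrightarrow> cprev (cnext k) = k"
  using three_le_n by (simp add: cprev_eq cnext_eq cnext_lt; arith)

lemma cnext_mod_add: "cnext ((i + t) mod n) = (i + Suc t) mod n"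
  by (simp add: cnext_def mod_Suc_eq)

text \<open>\<open>arc i m\<close> consists of the \<open>m\<close> consecutive positions \<open>i, i+1, \<dots>, i+m-1\<close> (mod \<open>n\<close>);
  its cyclic successor \<open>(i + m) mod n\<close> is called its end.\<close>

definition arc :: "nat \<Rightarrow> nat \<Rightarrow> nat set" where
  "arc i m = {k. k < n \<and> (k + n - i) mod n < m}"

lemma arc_subset: "arc i m \<subseteq> {..<n}" by (auto simp: arc_def)

lemma mem_arc: "i < n \<Longrightarrow> k \<in> arc i m \<longleftrightarrow> k < n \<and> (if i \<le> k then k - i else k + n - i) < m"
  by (cases "i \<le> k") (auto simp: arc_def le_mod_geq)

lemma arc_end_lt: "(i + m) mod n < n" using n_pos by simp

lemma start_mem_arc: "i < n \<Longrightarrow> 0 < m \<Longrightarrow> i \<in> arc i m"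
  by (simp add: mem_arc)

lemma cprev_start_notin_arc: "i < n \<Longrightarrow> m < n \<Longrightarrow> cprev i \<notin> arc i m"
  using three_le_n by (auto simp: mem_arc cprev_eq cprev_lt split: if_splits; arith)

lemma end_notin_arc: "i < n \<Longrightarrow> m < n \<Longrightarrow> (i + m) mod n \<notin> arc i m"
  using three_le_n by (auto simp: mem_arc mod_add_lt split: if_splits; arith)

lemma cprev_end_mem_arc: "i < n \<Longrightarrow> 0 < m \<Longrightarrow> m < n \<Longrightarrow> cprev ((i + m) mod n) \<in> arc i m"
  using three_le_n by (auto simp: mem_arc mod_add_lt cprev_eq cprev_lt split: if_splits; arith)

lemma arc_exit:
  "i < n \<Longrightarrow> m < n \<Longrightarrow> k \<in> arc i m \<Longrightarrow> cnext k \<notin> arc i m \<Longrightarrow> cnext k = (i + m) mod n"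
  using three_le_n by (auto simp: mem_arc mod_add_lt cnext_eq cnext_lt split: if_splits; arith)

lemma arc_entry: "i < n \<Longrightarrow> m < n \<Longrightarrow> k \<in> arc i m \<Longrightarrow> cprev k \<notin> arc i m \<Longrightarrow> k = i"
  using three_le_n by (auto simp: mem_arc cprev_eq cprev_lt split: if_splits; arith)

lemma insert_end_arc: "i < n \<Longrightarrow> m < n \<Longrightarrow> insert ((i + m) mod n) (arc i m) = arc i (m + 1)"
  using three_le_n by (auto simp: mem_arc mod_add_lt split: if_splits; arith)

lemma insert_cprev_arc: "i < n \<Longrightarrow> m < n \<Longrightarrow> insert (cprev i) (arc i m) = arc (cprev i) (m + 1)"
  using three_le_n by (auto simp: mem_arc cprev_eq cprev_lt split: if_splits; arith)

lemma arc_full: "i < n \<Longrightarrow> arc i n = {..<n}"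
  by (auto simp: mem_arc)

lemma arc_one: "k < n \<Longrightarrow> arc k 1 = {k}"
  by (auto simp: mem_arc split: if_splits; arith)

lemma arc_two: "k < n \<Longrightarrow> arc k 2 = {k, cnext k}"
  using insert_end_arc[of k 1] arc_one[of k] three_le_n
  by (simp add: cnext_def insert_commute numeral_2_eq_2)

lemma cyc_interval_eq_arc: "i < n \<Longrightarrow> l < n \<Longrightarrow> cyc_interval n i l = arc i (l + 1)"
proof (intro set_eqI iffI)
  fix x assume a: "i < n" "l < n" "x \<in> cyc_interval n i l"
  then obtain t where "t \<le> l" "x = (i + t) mod n" by (auto simp: cyc_interval_def)
  then show "x \<in> arc i (l + 1)" using a by (auto simp: mem_arc mod_add_lt)
next
  fix x assume a: "i < n" "l < n" "x \<in> arc i (l + 1)"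
  define t where "t = (if i \<le> x then x - i else x + n - i)"
  have "x < n" using a by (simp add: mem_arc)
  have "t \<le> l" using a by (auto simp: mem_arc t_def split: if_splits; arith)
  moreover have "x = (i + t) mod n" using a \<open>x < n\<close> by (auto simp: t_def mod_add_lt)
  ultimately show "x \<in> cyc_interval n i l" by (auto simp: cyc_interval_def)
qed

abbreviation Con where "Con \<equiv> Con_cycle n"

lemma full_mem_Con: "{..<n} \<in> Con" by (simp add: Con_cycle_def)

lemma arc_mem_Con:
  assumes "i < n" "0 < m" "m < n"
  shows "arc i m \<in> Con"
proof -
  have "arc i m = cyc_interval n i (m - 1)" using assms cyc_interval_eq_arc[of i "m - 1"] by simp
  moreover have "m - 1 + 1 < n" using assms by simp
  ultimately show ?thesis using assms(1) unfolding Con_cycle_def by blast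
qed

lemma Con_cases:
  assumes "X \<in> Con"
  obtains "X = {..<n}" | i m where "i < n" "0 < m" "m < n" "X = arc i m"
proof (cases "X = {..<n}")
  case False
  with assms obtain i l where "i < n" "l + 1 < n" "X = cyc_interval n i l"
    unfolding Con_cycle_def by auto
  then show ?thesis using that(2)[of i "l + 1"] cyc_interval_eq_arc[of i l] by simp
qed (use that in simp)

lemma Con_subset: "X \<in> Con \<Longrightarrow> X \<subseteq> {..<n}"
  by (erule Con_cases) (auto simp: arc_subset)

lemma Con_nonempty: "X \<in> Con \<Longrightarrow> X \<noteq> {}"
  by (erule Con_cases) (use n_pos start_mem_arc in auto)

lemma finite_Con_mem: "X \<in> Con \<Longrightarrow> finite X"
  using Con_subset finite_subset by blast

lemma finite_Con: "finite Con"
  by (rule finite_subset[of _ "Pow {..<n}"]) (auto dest: Con_subset)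

definition supp :: "(nat \<Rightarrow> real) \<Rightarrow> real" where
  "supp y = (\<Sum>X\<in>Con. Max (y ` X))"

lemma supp_add_le: "supp (a + b) \<le> supp a + supp b"
proof -
  have "supp (a + b) \<le> (\<Sum>X\<in>Con. Max (a ` X) + Max (b ` X))"
    unfolding supp_def
    by (intro sum_mono Max_image_add_le finite_Con_mem Con_nonempty)
  then show ?thesis by (simp add: supp_def sum.distrib)
qed

lemma supp_scaleR: "0 \<le> c \<Longrightarrow> supp (c *\<^sub>R a) = c * supp a"
  unfolding supp_def sum_distrib_left
  by (intro sum.cong refl Max_image_scaleR finite_Con_mem Con_nonempty)

lemma supp_zero: "supp 0 = 0"
  using supp_scaleR[of 0 0] by simp

lemma supp_le_one_convex: "convex {y \<in> H0 n. supp y \<le> 1}"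
  unfolding convex_def
proof (intro ballI allI impI)
  fix x y :: "nat \<Rightarrow> real" and u v :: real
  assume x: "x \<in> {y \<in> H0 n. supp y \<le> 1}" and y: "y \<in> {y \<in> H0 n. supp y \<le> 1}"
    and uv: "0 \<le> u" "0 \<le> v" "u + v = 1"
  have "supp (u *\<^sub>R x + v *\<^sub>R y) \<le> u * supp x + v * supp y"
    using supp_add_le[of "u *\<^sub>R x" "v *\<^sub>R y"] uv by (simp add: supp_scaleR)
  also have "\<dots> \<le> u * 1 + v * 1" using x y uv by (intro add_mono mult_left_mono) auto
  finally show "u *\<^sub>R x + v *\<^sub>R y \<in> {y \<in> H0 n. supp y \<le> 1}"
    using x y uv by (auto intro: H0_add H0_scaleR)
qed

lemma cyclohedron_polar_eq: "cyclohedron_polar n = {y \<in> H0 n. supp y \<le> 1}"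
proof (intro set_eqI iffI)
  fix y assume y: "y \<in> cyclohedron_polar n"
  then have yH: "y \<in> H0 n" by (simp add: cyclohedron_polar_def)
  define am where "am X = (SOME k. k \<in> X \<and> y k = Max (y ` X))" for X
  have am: "am X \<in> X \<and> y (am X) = Max (y ` X)" if "X \<in> Con" for X
  proof -
    have "Max (y ` X) \<in> y ` X" using finite_Con_mem[OF that] Con_nonempty[OF that] by simp
    then obtain k where "k \<in> X \<and> y k = Max (y ` X)" by auto
    then show ?thesis unfolding am_def by (rule someI)
  qed
  define w where "w = (\<Sum>X\<in>Con. unitv (am X))"
  have "w \<in> cyclohedron n"
    unfolding cyclohedron_def w_def simplex_face_def
    by (rule CollectI, rule exI[of _ "\<lambda>X. unitv (am X)"]) (use am in \<open>auto intro: hull_inc\<close>)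
  then have "w - (real (card Con) / real n) *\<^sub>R (\<lambda>j. if j < n then 1 else 0) \<in> cyclohedron_centered n"
    unfolding cyclohedron_centered_def by (rule imageI)
  then have "(\<Sum>j<n. y j * w j) \<le> 1"
    using y H0_sum_shift_const[OF yH] by (auto simp: cyclohedron_polar_def)
  moreover have "(\<Sum>j<n. y j * w j) = supp y"
    unfolding w_def sum_mult_sum_apply supp_def
  proof (intro sum.cong refl)
    fix X assume X: "X \<in> Con"
    then have "am X < n" using am Con_subset by blast
    then show "(\<Sum>j<n. y j * unitv (am X) j) = Max (y ` X)" using am[OF X] by (simp add: sum_mult_unitv)
  qed
  ultimately show "y \<in> {y \<in> H0 n. supp y \<le> 1}" using yH by simp
next
  fix y assume "y \<in> {y \<in> H0 n. supp y \<le> 1}"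
  then have yH: "y \<in> H0 n" and supp_y: "supp y \<le> 1" by auto
  have "(\<Sum>j<n. y j * x j) \<le> 1" if x: "x \<in> cyclohedron_centered n" for x
  proof -
    obtain p where p: "\<forall>X\<in>Con. p X \<in> simplex_face X"
      and x: "x = (\<Sum>X\<in>Con. p X) - (real (card Con) / real n) *\<^sub>R (\<lambda>j. if j < n then 1 else 0)"
      using x unfolding cyclohedron_centered_def cyclohedron_def by blast
    have "(\<Sum>j<n. y j * x j) = (\<Sum>X\<in>Con. \<Sum>j<n. y j * p X j)"
      unfolding x H0_sum_shift_const[OF yH] sum_mult_sum_apply ..
    also have "\<dots> \<le> supp y"
      unfolding supp_def using p
      by (intro sum_mono simplex_face_sum_mult_le_Max Con_subset finite_Con_mem Con_nonempty) auto
    finally show ?thesis using supp_y by simp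
  qed
  then show "y \<in> cyclohedron_polar n" using yH by (simp add: cyclohedron_polar_def)
qed

lemma H0_outside: "w \<in> H0 n \<Longrightarrow> n \<le> k \<Longrightarrow> w k = 0" by (simp add: H0_def)
lemma H0_sum: "w \<in> H0 n \<Longrightarrow> (\<Sum>k<n. w k) = 0" by (simp add: H0_def)

lemma H0_cyclically_constant:
  assumes w: "w \<in> H0 n" and c: "\<And>k. k < n \<Longrightarrow> w k = w (cprev k)"
  shows "w = 0"
proof -
  have e: "w k = w 0" if "k < n" for k
    using that
  proof (induction k)
    case (Suc k)
    then have "w (Suc k) = w (cprev (Suc k))" by (intro c)
    also have "cprev (Suc k) = k" using Suc.prems by (simp add: cprev_eq)
    finally show ?case using Suc by simp
  qed simp
  have "(\<Sum>k<n. w k) = (\<Sum>k<n. w 0)" by (intro sum.cong refl e) simp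
  then have "real n * w 0 = 0" using H0_sum[OF w] by simp
  then have "w 0 = 0" using n_pos by simp
  show ?thesis
  proof
    fix k show "w k = 0 k"
      using e[of k] \<open>w 0 = 0\<close> H0_outside[OF w, of k] by (cases "k < n") simp_all
  qed
qed

lemma H0_eq_if_cyclic_differences_eq:
  assumes "a \<in> H0 n" "b \<in> H0 n" "\<And>k. k < n \<Longrightarrow> a k - a (cprev k) = b k - b (cprev k)"
  shows "a = b"
proof -
  have "(a - b) k = (a - b) (cprev k)" if "k < n" for k
    using assms(3)[OF that] by simp
  then have "a - b = 0"
    using H0_diff[OF assms(1,2)] H0_cyclically_constant by blast
  then show ?thesis by simp
qed

text \<open>The inverse on \<open>H\<^sub>0\<close> of the (negated) cyclic difference operator: \<open>- \<Sum>\<^sub>l\<^sub>\<le>\<^sub>k z\<^sub>l\<close>,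
  recentred to have coordinate sum \<open>0\<close>.\<close>

definition antidiff :: "(nat \<Rightarrow> real) \<Rightarrow> nat \<Rightarrow> real" where
  "antidiff z = (\<lambda>k. if k < n then (\<Sum>k'<n. \<Sum>l\<le>k'. z l) / real n - (\<Sum>l\<le>k. z l) else 0)"

lemma linear_antidiff: "linear antidiff"
proof (rule linearI)
  fix x y :: "nat \<Rightarrow> real"
  show "antidiff (x + y) = antidiff x + antidiff y"
    by (rule ext) (simp add: antidiff_def sum.distrib add_divide_distrib)
next
  fix r and x :: "nat \<Rightarrow> real"
  show "antidiff (r *\<^sub>R x) = r *\<^sub>R antidiff x"
    by (rule ext) (simp add: antidiff_def sum_distrib_left[symmetric] right_diff_distrib)
qed

lemma antidiff_H0: "antidiff z \<in> H0 n"
proof -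
  define C where "C = (\<Sum>k'<n. \<Sum>l\<le>k'. z l)"
  have "(\<Sum>k<n. antidiff z k) = (\<Sum>k<n. C / real n - (\<Sum>l\<le>k. z l))"
    by (intro sum.cong) (auto simp: antidiff_def C_def)
  also have "\<dots> = 0" using n_pos by (simp add: sum_subtractf C_def)
  finally show ?thesis by (simp add: H0_def antidiff_def)
qed

lemma antidiff_cyclic_difference:
  assumes z: "z \<in> H0 n" and k: "k < n"
  shows "antidiff z k - antidiff z (cprev k) = - z k"
proof (cases k)
  case 0
  have "{..n - 1} = {..<n}" using n_pos by auto
  then have "(\<Sum>l\<le>n - 1. z l) = 0" using H0_sum[OF z] by simp
  moreover have "cprev k = n - 1" using 0 n_pos by (simp add: cprev_eq)
  ultimately show ?thesis using 0 n_pos by (simp add: antidiff_def)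
next
  case (Suc k')
  moreover have "cprev k = k'" using Suc k by (simp add: cprev_eq)
  ultimately show ?thesis using k by (simp add: antidiff_def)
qed

lemma inj_on_antidiff: "inj_on antidiff (H0 n)"
proof (rule inj_onI, rule ext)
  fix z1 z2 k assume z: "z1 \<in> H0 n" "z2 \<in> H0 n" "antidiff z1 = antidiff z2"
  show "z1 k = z2 k"
  proof (cases "k < n")
    case True
    then show ?thesis
      using antidiff_cyclic_difference[OF z(1) True] antidiff_cyclic_difference[OF z(2) True] z(3)
      by simp
  qed (use H0_outside[OF z(1), of k] H0_outside[OF z(2), of k] in simp)
qed

definition wv :: "nat \<Rightarrow> nat \<Rightarrow> nat \<Rightarrow> real" where
  "wv i j = antidiff (unitv i - unitv j)"

lemma wv_H0: "wv i j \<in> H0 n"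
  unfolding wv_def by (rule antidiff_H0)

lemma wv_cyclic_difference:
  "i < n \<Longrightarrow> j < n \<Longrightarrow> k < n \<Longrightarrow>
   wv i j k - wv i j (cprev k) = (if k = j then 1 else 0) - (if k = i then 1 else 0)"
  unfolding wv_def using antidiff_cyclic_difference[OF H0_unitv_diff] by (simp add: unitv_def)

lemma wv_trans: "wv i k = wv i j + wv j k"
  unfolding wv_def linear_add[OF linear_antidiff, symmetric] by simp

lemma wv_self: "wv i i = 0"
  unfolding wv_def using linear_0[OF linear_antidiff] by simp

lemma wv_swap: "wv j i = - wv i j"
  using wv_trans[of j j i] by (simp add: wv_self eq_neg_iff_add_eq_0)

text \<open>\<open>ind_c S\<close> is the centred indicator of the complement of \<open>S\<close>.\<close>

definition ind_c :: "nat set \<Rightarrow> nat \<Rightarrow> real" where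
  "ind_c S = (\<lambda>k. if k < n then real (card S) / real n - (if k \<in> S then 1 else 0) else 0)"

lemma ind_c_H0:
  assumes "S \<subseteq> {..<n}"
  shows "ind_c S \<in> H0 n"
proof -
  have "(\<Sum>k<n. if k \<in> S then 1 else 0) = real (card S)"
    using assms by (simp add: sum.If_cases Int_absorb1)
  then have "(\<Sum>k<n. ind_c S k) = 0"
    using n_pos by (simp add: ind_c_def sum_subtractf)
  then show ?thesis by (simp add: H0_def ind_c_def)
qed

lemma ind_c_Un:
  assumes "A \<inter> B = {}" "finite A" "finite B"
  shows "ind_c (A \<union> B) = ind_c A + ind_c B"
  by (rule ext) (use assms in \<open>auto simp: ind_c_def card_Un_disjoint add_divide_distrib\<close>)

lemma Max_ind_c:
  assumes "X \<subseteq> {..<n}" "X \<noteq> {}"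
  shows "Max (ind_c S ` X) = real (card S) / real n - (if X \<subseteq> S then 1 else 0)"
proof (rule Max_eqI)
  show "finite (ind_c S ` X)" using assms finite_subset by auto
  show "y \<le> real (card S) / real n - (if X \<subseteq> S then 1 else 0)" if "y \<in> ind_c S ` X" for y
    using that assms by (auto simp: ind_c_def split: if_splits)
  obtain k where "k \<in> X" "X \<subseteq> S \<or> k \<notin> S" using assms by auto
  then show "real (card S) / real n - (if X \<subseteq> S then 1 else 0) \<in> ind_c S ` X"
    using assms by (intro image_eqI[of _ _ k]) (auto simp: ind_c_def)
qed


lemma ind_c_arc:
  assumes i: "i < n" and m: "0 < m" "m < n"
  shows "ind_c (arc i m) = wv i ((i + m) mod n)"
proof (rule H0_eq_if_cyclic_differences_eq)
  let ?A = "arc i m" and ?j = "(i + m) mod n"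
  show "ind_c ?A \<in> H0 n" by (rule ind_c_H0[OF arc_subset])
  show "wv i ?j \<in> H0 n" by (rule wv_H0)
  fix k assume k: "k < n"
  have iA: "i \<in> ?A" and jA: "?j \<notin> ?A" and pi: "cprev i \<notin> ?A" and pj: "cprev ?j \<in> ?A"
    using start_mem_arc[OF i m(1)] end_notin_arc[OF i m(2)] cprev_start_notin_arc[OF i m(2)]
      cprev_end_mem_arc[OF i m] by auto
  have "(if cprev k \<in> ?A then 1 else 0) - (if k \<in> ?A then 1 else (0::real))
      = (if k = ?j then 1 else 0) - (if k = i then 1 else 0)"
  proof (cases "k \<in> ?A"; cases "cprev k \<in> ?A")
    assume "k \<in> ?A" "cprev k \<in> ?A"
    then show ?thesis using jA pi by auto
  next
    assume "k \<in> ?A" "cprev k \<notin> ?A"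
    then show ?thesis using arc_entry[OF i m(2)] iA jA by auto
  next
    assume "k \<notin> ?A" "cprev k \<in> ?A"
    then have "k = ?j" using arc_exit[OF i m(2), of "cprev k"] cnext_cprev[OF k] by simp
    then show ?thesis using \<open>k \<notin> ?A\<close> \<open>cprev k \<in> ?A\<close> iA by auto
  next
    assume "k \<notin> ?A" "cprev k \<notin> ?A"
    then show ?thesis using pj iA by auto
  qed
  then show "ind_c ?A k - ind_c ?A (cprev k) = wv i ?j k - wv i ?j (cprev k)"
    using k cprev_lt[of k] wv_cyclic_difference[OF i arc_end_lt k] by (simp add: ind_c_def)
qed

definition rot :: "nat \<Rightarrow> nat \<Rightarrow> nat" where "rot s k = (k + s) mod n"

lemma rot_lt: "rot s k < n" using n_pos by (simp add: rot_def)

lemma inj_on_rot: "s < n \<Longrightarrow> inj_on (rot s) {..<n}"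
  by (rule inj_onI) (auto simp: rot_def mod_add_lt split: if_splits)

lemma rot_image: "s < n \<Longrightarrow> rot s ` {..<n} = {..<n}"
  by (rule endo_inj_surj) (auto simp: rot_lt inj_on_rot)

lemma rot_image_cyc_interval: "rot s ` cyc_interval n i l = cyc_interval n ((i + s) mod n) l"
proof -
  have "rot s ((i + t) mod n) = ((i + s) mod n + t) mod n" for t
  proof -
    have "rot s ((i + t) mod n) = (i + t + s) mod n" by (simp add: rot_def mod_add_left_eq)
    also have "\<dots> = (i + s + t) mod n" by (simp add: ac_simps)
    finally show ?thesis by (simp add: mod_add_left_eq)
  qed
  moreover have "cyc_interval n i' l = (\<lambda>t. (i' + t) mod n) ` {..l}" for i'
    by (auto simp: cyc_interval_def)
  ultimately show ?thesis by (simp add: image_image)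
qed

abbreviation Con_proper where "Con_proper \<equiv> Con - {{..<n}}"

lemma rot_image_Con_proper: "s < n \<Longrightarrow> X \<in> Con_proper \<Longrightarrow> rot s ` X \<in> Con_proper"
proof -
  assume s: "s < n" and X: "X \<in> Con_proper"
  then obtain i l where il: "i < n" "l + 1 < n" "X = cyc_interval n i l"
    unfolding Con_cycle_def by auto
  have "(i + s) mod n < n" using n_pos by simp
  moreover have "rot s ` X = cyc_interval n ((i + s) mod n) l"
    using il(3) by (simp add: rot_image_cyc_interval)
  ultimately have "rot s ` X \<in> Con"
    using il(2) unfolding Con_cycle_def by blast
  moreover have "rot s ` X \<noteq> rot s ` {..<n}"
    using X Con_subset inj_on_image_eq_iff[OF inj_on_rot[OF s], of X "{..<n}"] by auto
  ultimately show ?thesis using rot_image[OF s] by auto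
qed

lemma inj_on_image_rot: "s < n \<Longrightarrow> inj_on ((`) (rot s)) Con_proper"
  using inj_on_image_eq_iff[OF inj_on_rot] Con_subset by (intro inj_onI) blast

lemma image_rot_Con_proper: "s < n \<Longrightarrow> (`) (rot s) ` Con_proper = Con_proper"
  by (rule endo_inj_surj) (use finite_Con rot_image_Con_proper inj_on_image_rot in auto)

lemma sum_rot: "x < n \<Longrightarrow> (\<Sum>s<n. w (rot s x)) = (\<Sum>k<n. w k)"
proof -
  assume x: "x < n"
  have "(\<Sum>k<n. w k) = (\<Sum>k\<in>rot x ` {..<n}. w k)" using rot_image[OF x] by simp
  also have "\<dots> = (\<Sum>s<n. w (rot x s))" by (subst sum.reindex[OF inj_on_rot[OF x]]) simp
  finally show ?thesis by (simp add: rot_def add.commute)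
qed

text \<open>Averaging over the \<open>n\<close> rotations: each proper interval \<open>X\<close> and a point \<open>x \<in> X\<close> give
  \<open>\<Sum>\<^sub>s max\<^sub>r\<^sub>o\<^sub>t \<^sub>s \<^sub>X w \<ge> \<Sum>\<^sub>s w (rot s x) = 0\<close>, and the rotations permute the proper intervals.\<close>

lemma sum_Max_Con_proper_nonneg:
  assumes w: "w \<in> H0 n"
  shows "0 \<le> (\<Sum>X\<in>Con_proper. Max (w ` X))"
proof -
  let ?P = "\<Sum>X\<in>Con_proper. Max (w ` X)"
  have rot_invariant: "?P = (\<Sum>X\<in>Con_proper. Max (w ` (rot s ` X)))" if "s < n" for s
    using sum.reindex[OF inj_on_image_rot[OF that], of "\<lambda>X. Max (w ` X)"]
    unfolding image_rot_Con_proper[OF that] by simp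
  have "0 \<le> (\<Sum>s<n. Max (w ` (rot s ` X)))" if X: "X \<in> Con_proper" for X
  proof -
    obtain x where x: "x \<in> X" using X Con_nonempty by blast
    then have "x < n" using X Con_subset by blast
    then have "0 = (\<Sum>s<n. w (rot s x))" using H0_sum[OF w] sum_rot[of x w] by simp
    also have "\<dots> \<le> (\<Sum>s<n. Max (w ` (rot s ` X)))"
      using x X finite_Con_mem by (intro sum_mono Max_ge) auto
    finally show ?thesis .
  qed
  then have "0 \<le> (\<Sum>X\<in>Con_proper. \<Sum>s<n. Max (w ` (rot s ` X)))" by (rule sum_nonneg)
  also have "\<dots> = (\<Sum>s<n. \<Sum>X\<in>Con_proper. Max (w ` (rot s ` X)))"
    by (rule sum.swap)
  also have "\<dots> = (\<Sum>s<n. ?P)"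
    using rot_invariant by (rule sum.cong[OF refl, symmetric]) simp
  also have "\<dots> = real n * ?P" by simp
  finally have "0 \<le> real n * ?P" .
  then show ?thesis using n_pos by (simp add: zero_le_mult_iff)
qed

lemma supp_pos:
  assumes w: "w \<in> H0 n" and k: "k < n" "0 < w k"
  shows "0 < supp w"
proof -
  have "w k \<le> Max (w ` {..<n})" using k by (intro Max_ge) auto
  moreover have "supp w = Max (w ` {..<n}) + (\<Sum>X\<in>Con_proper. Max (w ` X))"
    unfolding supp_def by (rule sum.remove[OF finite_Con full_mem_Con])
  ultimately show ?thesis using sum_Max_Con_proper_nonneg[OF w] k by linarith
qed

lemma supp_wv_pos:
  assumes i: "i < n" and j: "j < n" and ij: "i \<noteq> j"
  shows "0 < supp (wv i j)"
proof -
  have "\<exists>k<n. 0 < wv i j k"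
  proof (rule ccontr)
    assume none_pos: "\<not> (\<exists>k<n. 0 < wv i j k)"
    have nonneg: "0 \<le> - wv i j k" if "k \<in> {..<n}" for k
    proof -
      have "\<not> 0 < wv i j k" using that none_pos by blast
      then show ?thesis by simp
    qed
    have "(\<Sum>k<n. - wv i j k) = 0" using H0_sum[OF wv_H0, of i j] by (simp add: sum_negf)
    then have "\<forall>k\<in>{..<n}. - wv i j k = 0"
      using sum_nonneg_eq_0_iff[of "{..<n}" "\<lambda>k. - wv i j k"] nonneg by simp
    then show False using wv_cyclic_difference[OF i j j] ij j cprev_lt[of j] by auto
  qed
  then show ?thesis using supp_pos[OF wv_H0] by blast
qed

definition rho :: "nat \<Rightarrow> nat \<Rightarrow> real" where "rho i j = supp (wv i j)"

lemma rho_nonneg: "i < n \<Longrightarrow> j < n \<Longrightarrow> 0 \<le> rho i j"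
  using supp_wv_pos[of i j] by (cases "i = j") (auto simp: rho_def wv_self supp_zero)

lemma rho_eq_0_iff: "i < n \<Longrightarrow> j < n \<Longrightarrow> rho i j = 0 \<longleftrightarrow> i = j"
  using supp_wv_pos[of i j] by (cases "i = j") (auto simp: rho_def wv_self supp_zero)

lemma rho_triangle: "rho i k \<le> rho i j + rho j k"
  unfolding rho_def wv_trans[of i k j] by (rule supp_add_le)

lemma quasi_metric_on_rho: "quasi_metric_on n rho"
  unfolding quasi_metric_on_def using rho_nonneg rho_eq_0_iff rho_triangle by blast

lemma rho_strict_triangle:
  assumes i: "i < n" and j: "j < n" and k: "k < n" and d: "i \<noteq> j" "j \<noteq> k"
  shows "rho i k < rho i j + rho j k"
proof -
  let ?a = "wv i j" and ?b = "wv j k" and ?p = "cprev j"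
  have X: "{?p, j} \<in> Con"
    using arc_mem_Con[OF cprev_lt[of j], of 2] arc_two[OF cprev_lt[of j]] cnext_cprev[OF j] three_le_n
    by simp
  have "?a j = ?a ?p + 1" "?b j = ?b ?p - 1"
    using wv_cyclic_difference[OF i j j] wv_cyclic_difference[OF j k j] d by auto
  then have "Max ((?a + ?b) ` {?p, j}) < Max (?a ` {?p, j}) + Max (?b ` {?p, j})"
    by simp
  then have "(\<Sum>X\<in>Con. Max ((?a + ?b) ` X)) < (\<Sum>X\<in>Con. Max (?a ` X) + Max (?b ` X))"
    using X by (intro sum_strict_mono_ex1 finite_Con ballI Max_image_add_le finite_Con_mem
        Con_nonempty bexI[of _ "{?p, j}"])
  then show ?thesis unfolding rho_def supp_def wv_trans[of i k j] by (simp add: sum.distrib)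
qed

definition K :: "(nat \<Rightarrow> real) set" where "K = antidiff ` KR n rho"

lemma convex_K: "convex K"
  unfolding K_def KR_def by (intro convex_linear_image[OF linear_antidiff] convex_convex_hull)

lemma wv_div_rho_mem_K:
  assumes "i < n" "j < n" "i \<noteq> j"
  shows "(1 / rho i j) *\<^sub>R wv i j \<in> K"
proof -
  have "(1 / rho i j) *\<^sub>R (unitv i - unitv j) \<in> KR n rho"
    unfolding KR_def using assms by (intro hull_inc) blast
  then show ?thesis
    unfolding K_def wv_def linear_scale[OF linear_antidiff, symmetric] by (rule imageI)
qed

lemma zero_mem_K: "0 \<in> K"
proof -
  have n01: "(0::nat) < n" "(1::nat) < n" "(0::nat) \<noteq> 1" using three_le_n by auto
  define p where "p = rho 0 1"
  define q where "q = rho 1 0"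
  have pq: "0 < p" "0 < q" unfolding p_def q_def rho_def using supp_wv_pos n01 by auto
  have "(1 / p) *\<^sub>R wv 0 1 \<in> K" "(1 / q) *\<^sub>R (- wv 0 1) \<in> K"
    unfolding p_def q_def using wv_div_rho_mem_K[of 0 1] wv_div_rho_mem_K[of 1 0] wv_swap[of 0 1] n01
    by auto
  then have "(p / (p + q)) *\<^sub>R ((1 / p) *\<^sub>R wv 0 1) + (q / (p + q)) *\<^sub>R ((1 / q) *\<^sub>R (- wv 0 1)) \<in> K"
    using pq by (intro convexD[OF convex_K]) (auto simp: add_divide_distrib[symmetric])
  then show ?thesis using pq by simp
qed

lemma gauge_le_supp_wv:
  assumes "i < n" "j < n" "i \<noteq> j"
  shows "gauge_le K (wv i j) (supp (wv i j))"
  using gauge_le_scaleR_mem[OF wv_div_rho_mem_K[OF assms], of "rho i j"] supp_wv_pos[OF assms]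
  by (simp add: rho_def)

lemma gauge_le_supp_add:
  assumes "gauge_le K a (supp a)" "gauge_le K b (supp b)" "supp a + supp b \<le> supp (a + b)"
  shows "gauge_le K (a + b) (supp (a + b))"
  using gauge_le_add[OF convex_K assms(1,2)] assms(3) by (rule gauge_le_mono)

lemma exists_maximal_arc:
  assumes L: "L \<subseteq> {..<n}" "L \<noteq> {}" "L \<noteq> {..<n}"
  obtains i m where "i < n" "0 < m" "m < n" "arc i m \<subseteq> L" "cprev i \<notin> L" "(i + m) mod n \<notin> L"
proof -
  define M where "M = {m. \<exists>i<n. 0 < m \<and> m < n \<and> arc i m \<subseteq> L}"
  obtain k where k: "k \<in> L" using L by auto
  then have "k < n" using L by auto
  then have "1 \<in> M" unfolding M_def using arc_one[of k] k three_le_n by auto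
  moreover have fin: "finite M" unfolding M_def by (rule finite_subset[of _ "{..<n}"]) auto
  ultimately have "Max M \<in> M" by (intro Max_in) auto
  then obtain i where i: "i < n" "0 < Max M" "Max M < n" "arc i (Max M) \<subseteq> L"
    unfolding M_def by auto
  have no_longer: False if "i' < n" "arc i' (Max M + 1) \<subseteq> L" for i'
  proof (cases "Max M + 1 < n")
    case True
    then have "Max M + 1 \<in> M" using that by (auto simp: M_def)
    then show False using Max_ge[OF fin] by fastforce
  next
    case False
    then have "Max M + 1 = n" using i by simp
    then show False using that arc_full[of i'] L by simp
  qed
  have "cprev i \<notin> L"
    using no_longer[OF cprev_lt[of i]] insert_cprev_arc[OF i(1,3)] i(4) by (metis insert_subset)
  moreover have "(i + Max M) mod n \<notin> L"
    using no_longer[OF i(1)] insert_end_arc[OF i(1,3)] i(4) by (metis insert_subset)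
  ultimately show ?thesis using that i by blast
qed

lemma Con_subset_split_arc:
  assumes i: "i < n" and m: "m < n"
    and L: "L \<subseteq> {..<n}" "L \<noteq> {..<n}" "arc i m \<subseteq> L" "cprev i \<notin> L" "(i + m) mod n \<notin> L"
    and X: "X \<in> Con" "X \<subseteq> L"
  shows "X \<subseteq> arc i m \<or> X \<subseteq> L - arc i m"
proof (rule ccontr)
  let ?A = "arc i m"
  assume nc: "\<not> (X \<subseteq> ?A \<or> X \<subseteq> L - ?A)"
  have "X \<noteq> {..<n}" using X L by auto
  with X obtain i' l where il: "i' < n" "l + 1 < n" "X = cyc_interval n i' l"
    unfolding Con_cycle_def by auto
  define P where "P t = ((i' + t) mod n \<in> ?A)" for t
  have inX: "(i' + t) mod n \<in> X" if "t \<le> l" for t using il that by (auto simp: cyc_interval_def)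
  from nc obtain x1 where x1: "x1 \<in> X" "x1 \<notin> ?A" by auto
  from nc obtain x2 where x2: "x2 \<in> X" "x2 \<notin> L - ?A" by auto
  obtain t1 where t1: "t1 \<le> l" "\<not> P t1" using x1 il unfolding P_def cyc_interval_def by auto
  obtain t2 where t2: "t2 \<le> l" "P t2" using x2 il X unfolding P_def cyc_interval_def by auto
  have "t1 \<noteq> t2" using t1 t2 by auto
  then consider "t2 < t1" | "t1 < t2" by linarith
  then show False
  proof cases
    case 1
    then obtain t where t: "t < t1" "P t" "\<not> P (Suc t)"
      using nat_crossing[of P t2 t1] t1 t2 by blast
    have "cnext ((i' + t) mod n) \<notin> ?A" using t(3) unfolding P_def cnext_mod_add .
    then have "cnext ((i' + t) mod n) = (i + m) mod n" using arc_exit[OF i m] t(2) unfolding P_def by blast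
    moreover have "(i' + Suc t) mod n \<in> L" using inX[of "Suc t"] t t1 X by auto
    ultimately show False using L(5) cnext_mod_add by simp
  next
    case 2
    then obtain t where t: "t < t2" "\<not> P t" "P (Suc t)"
      using nat_crossing[of "\<lambda>t. \<not> P t" t1 t2] t1 t2 by blast
    define k where "k = (i' + t) mod n"
    have k: "k < n" unfolding k_def using n_pos by simp
    have next_k: "cnext k \<in> ?A" using t(3) unfolding P_def k_def cnext_mod_add .
    have "cprev (cnext k) \<notin> ?A" using t(2) cprev_cnext[OF k] unfolding P_def k_def by simp
    then have "cnext k = i" using arc_entry[OF i m next_k] by simp
    then have "k = cprev i" using cprev_cnext[OF k] by simp
    moreover have "k \<in> L" unfolding k_def using inX[of t] t t2 X by auto
    ultimately show False using L(4) by simp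
  qed
qed

lemma supp_ind_c_Un_ge:
  assumes AB: "A \<inter> B = {}" "A \<union> B \<subseteq> {..<n}"
    and split: "\<And>X. X \<in> Con \<Longrightarrow> X \<subseteq> A \<union> B \<Longrightarrow> X \<subseteq> A \<or> X \<subseteq> B"
  shows "supp (ind_c A) + supp (ind_c B) \<le> supp (ind_c (A \<union> B))"
proof -
  have fin: "finite A" "finite B" using AB(2) finite_subset by auto
  have "Max (ind_c A ` X) + Max (ind_c B ` X) \<le> Max (ind_c (A \<union> B) ` X)" if X: "X \<in> Con" for X
  proof -
    have "(if X \<subseteq> A \<union> B then 1 else 0) \<le> (if X \<subseteq> A then 1 else 0) + (if X \<subseteq> B then (1::real) else 0)"
      using split[OF X] by auto
    moreover have "real (card (A \<union> B)) = real (card A) + real (card B)"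
      using AB(1) fin by (simp add: card_Un_disjoint)
    ultimately show ?thesis
      unfolding Max_ind_c[OF Con_subset[OF X] Con_nonempty[OF X]] by (simp add: add_divide_distrib)
  qed
  then show ?thesis unfolding supp_def sum.distrib[symmetric] by (rule sum_mono)
qed

lemma gauge_le_supp_ind_c:
  "L \<subseteq> {..<n} \<Longrightarrow> L \<noteq> {} \<Longrightarrow> L \<noteq> {..<n} \<Longrightarrow> gauge_le K (ind_c L) (supp (ind_c L))"
proof (induction "card L" arbitrary: L rule: less_induct)
  case less
  obtain i m where im: "i < n" "0 < m" "m < n" "arc i m \<subseteq> L" "cprev i \<notin> L" "(i + m) mod n \<notin> L"
    using exists_maximal_arc[OF less.prems] by blast
  let ?A = "arc i m"
  have iA: "i \<in> ?A" using start_mem_arc im by simp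
  show ?case
  proof (cases "?A = L")
    case True
    have "i \<noteq> (i + m) mod n" using iA end_notin_arc[OF im(1,3)] by metis
    then show ?thesis
      using gauge_le_supp_wv[OF im(1) arc_end_lt] ind_c_arc[OF im(1-3)] True by simp
  next
    case False
    define B where "B = L - ?A"
    have finL: "finite L" using less.prems(1) finite_subset by auto
    have LAB: "L = ?A \<union> B" "?A \<inter> B = {}" using im(4) B_def by auto
    have "?A \<subset> L" "B \<subset> L" using im(4) False iA unfolding B_def by auto
    then have "card ?A < card L" "card B < card L" using psubset_card_mono[OF finL] by auto
    moreover have "?A \<noteq> {}" "?A \<noteq> {..<n}" "B \<noteq> {}" "B \<subseteq> {..<n}" "B \<noteq> {..<n}"
      using iA \<open>?A \<subset> L\<close> \<open>B \<subset> L\<close> less.prems(1) False im(4) B_def by auto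
    ultimately have "gauge_le K (ind_c ?A) (supp (ind_c ?A))" "gauge_le K (ind_c B) (supp (ind_c B))"
      using less.hyps arc_subset by blast+
    moreover have "supp (ind_c ?A) + supp (ind_c B) \<le> supp (ind_c L)"
      using supp_ind_c_Un_ge[OF LAB(2)] Con_subset_split_arc[OF im(1,3) less.prems(1,3) im(4-6)]
        less.prems(1) LAB(1) arc_subset[of i m] unfolding B_def by simp
    moreover have "ind_c L = ind_c ?A + ind_c B"
      using ind_c_Un[OF LAB(2)] finL LAB(1) by (metis finite_Un)
    ultimately show ?thesis using gauge_le_supp_add by simp
  qed
qed

lemma supp_lift_level_set:
  assumes L: "L \<subseteq> {..<n}" "\<And>k. k \<in> L \<Longrightarrow> y k = v"
    and gap: "\<And>k. k < n \<Longrightarrow> k \<notin> L \<Longrightarrow> v + d \<le> y k" and d: "0 \<le> d"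
  shows "supp (y - d *\<^sub>R ind_c L) + d * supp (ind_c L) \<le> supp y"
proof -
  let ?c = "real (card L) / real n"
  have "Max ((y - d *\<^sub>R ind_c L) ` X) + d * Max (ind_c L ` X) \<le> Max (y ` X)" if X: "X \<in> Con" for X
  proof -
    have XX: "X \<subseteq> {..<n}" "finite X" "X \<noteq> {}"
      using Con_subset[OF X] finite_Con_mem[OF X] Con_nonempty[OF X] .
    have "(y - d *\<^sub>R ind_c L) k \<le> Max (y ` X) + d * (if X \<subseteq> L then 1 else 0) - d * ?c"
      if k: "k \<in> X" for k
    proof -
      have "y k \<le> Max (y ` X)" using k XX by (intro Max_ge) auto
      moreover have "v + d \<le> Max (y ` X)" if XL: "\<not> X \<subseteq> L"
      proof -
        obtain x where x: "x \<in> X" "x \<notin> L" using XL by auto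
        then have "v + d \<le> y x" using gap XX by auto
        also have "\<dots> \<le> Max (y ` X)" using x XX by (intro Max_ge) auto
        finally show ?thesis .
      qed
      ultimately show ?thesis
        using k XX L(2)[of k] by (auto simp: ind_c_def algebra_simps)
    qed
    then have "Max ((y - d *\<^sub>R ind_c L) ` X) \<le> Max (y ` X) + d * (if X \<subseteq> L then 1 else 0) - d * ?c"
      using XX by (subst Max_le_iff) auto
    then show ?thesis unfolding Max_ind_c[OF XX(1,3)] by (simp add: algebra_simps)
  qed
  then have "(\<Sum>X\<in>Con. Max ((y - d *\<^sub>R ind_c L) ` X) + d * Max (ind_c L ` X)) \<le> supp y"
    unfolding supp_def by (rule sum_mono)
  then show ?thesis by (simp add: supp_def sum.distrib sum_distrib_left)
qed

text \<open>Lifting the minimum level set of \<open>y\<close> to the second smallest value removes one value.\<close>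

lemma card_values_lift_min_level:
  assumes v: "v = Min (y ` {..<n})" and L: "L = {k. k < n \<and> y k = v}"
    and v': "v' = Min (y ` ({..<n} - L))" "L \<noteq> {..<n}"
  shows "card ((y - (v' - v) *\<^sub>R ind_c L) ` {..<n}) < card (y ` {..<n})"
proof -
  define g where "g k = (if k \<in> L then v' else y k)" for k
  define c where "c = real (card L) / real n"
  have yL: "y k = v" if "k \<in> L" for k using that L by simp
  have "(y - (v' - v) *\<^sub>R ind_c L) k = g k - (v' - v) * c" if "k < n" for k
    using that yL[of k] by (cases "k \<in> L") (auto simp: g_def ind_c_def c_def[symmetric] algebra_simps)
  then have "(y - (v' - v) *\<^sub>R ind_c L) ` {..<n} = (\<lambda>t. t - (v' - v) * c) ` g ` {..<n}"
    by (auto simp: image_image)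
  then have "card ((y - (v' - v) *\<^sub>R ind_c L) ` {..<n}) \<le> card (g ` {..<n})"
    by (simp add: card_image_le)
  also have "\<dots> \<le> card (y ` {..<n} - {v})"
  proof (rule card_mono)
    have "v' \<in> y ` ({..<n} - L)" unfolding v' using v' L by (intro Min_in) auto
    then show "g ` {..<n} \<subseteq> y ` {..<n} - {v}" by (auto simp: g_def L)
  qed simp
  also have "\<dots> < card (y ` {..<n})"
    using n_pos unfolding v by (intro card_Diff1_less Min_in) auto
  finally show ?thesis .
qed

lemma gauge_le_supp_H0: "y \<in> H0 n \<Longrightarrow> gauge_le K y (supp y)"
proof (induction "card (y ` {..<n})" arbitrary: y rule: less_induct)
  case less
  show ?case
  proof (cases "\<forall>k<n. y k = y (cprev k)")
    case True
    then have "y = 0" using H0_cyclically_constant[OF less.prems] by blast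
    then show ?thesis using gauge_le_zero zero_mem_K supp_zero by auto
  next
    case False
    define v where "v = Min (y ` {..<n})"
    define L where "L = {k. k < n \<and> y k = v}"
    define v' where "v' = Min (y ` ({..<n} - L))"
    have Ls: "L \<subseteq> {..<n}" unfolding L_def by auto
    have "v \<in> y ` {..<n}" unfolding v_def using n_pos by (intro Min_in) auto
    then have Lne: "L \<noteq> {}" unfolding L_def by auto
    have Ln: "L \<noteq> {..<n}"
    proof
      assume "L = {..<n}"
      then have "y k = v" if "k < n" for k using that unfolding L_def by blast
      then show False using False cprev_lt by metis
    qed
    have v'_le: "v' \<le> y k" if "k < n" "k \<notin> L" for k
      unfolding v'_def using that by (intro Min_le) auto
    have "v < v'"
    proof -
      have "v' \<in> y ` ({..<n} - L)" unfolding v'_def using Ls Ln by (intro Min_in) auto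
      then show ?thesis unfolding L_def v_def by (auto intro: order.not_eq_order_implies_strict)
    qed
    let ?y' = "y - (v' - v) *\<^sub>R ind_c L"
    have "?y' \<in> H0 n" using less.prems by (intro H0_diff H0_scaleR ind_c_H0 Ls)
    then have "gauge_le K ?y' (supp ?y')"
      using less.hyps card_values_lift_min_level[OF v_def L_def v'_def Ln] by blast
    moreover have "gauge_le K ((v' - v) *\<^sub>R ind_c L) (supp ((v' - v) *\<^sub>R ind_c L))"
      using gauge_le_scaleR[OF gauge_le_supp_ind_c[OF Ls Lne Ln], of "v' - v"] \<open>v < v'\<close>
      by (simp add: supp_scaleR)
    moreover have "supp ?y' + supp ((v' - v) *\<^sub>R ind_c L) \<le> supp y"
      using supp_lift_level_set[OF Ls, of y v "v' - v"] v'_le \<open>v < v'\<close>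
      by (simp add: L_def supp_scaleR)
    ultimately show ?thesis using gauge_le_supp_add[of ?y' "(v' - v) *\<^sub>R ind_c L"] by simp
  qed
qed

lemma image_antidiff_KR: "antidiff ` KR n rho = cyclohedron_polar n"
proof
  have "antidiff ` KR n rho = convex hull (antidiff ` {(1 / rho i j) *\<^sub>R (unitv i - unitv j) | i j. i < n \<and> j < n \<and> i \<noteq> j})"
    unfolding KR_def by (rule convex_hull_linear_image[OF linear_antidiff])
  also have "\<dots> \<subseteq> {y \<in> H0 n. supp y \<le> 1}"
  proof (rule hull_minimal)
    show "convex {y \<in> H0 n. supp y \<le> 1}" by (rule supp_le_one_convex)
  next
    show "antidiff ` {(1 / rho i j) *\<^sub>R (unitv i - unitv j) | i j. i < n \<and> j < n \<and> i \<noteq> j}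
      \<subseteq> {y \<in> H0 n. supp y \<le> 1}"
    proof safe
    fix i j assume ij: "i < n" "j < n" "i \<noteq> j"
    have "antidiff ((1 / rho i j) *\<^sub>R (unitv i - unitv j)) = (1 / rho i j) *\<^sub>R wv i j"
      unfolding wv_def by (rule linear_scale[OF linear_antidiff])
    then show "antidiff ((1 / rho i j) *\<^sub>R (unitv i - unitv j)) \<in> H0 n"
      "supp (antidiff ((1 / rho i j) *\<^sub>R (unitv i - unitv j))) \<le> 1"
      using supp_wv_pos[OF ij] by (auto simp: supp_scaleR rho_def intro: H0_scaleR wv_H0)
    qed
  qed
  finally show "antidiff ` KR n rho \<subseteq> cyclohedron_polar n"
    unfolding cyclohedron_polar_eq .
next
  show "cyclohedron_polar n \<subseteq> antidiff ` KR n rho"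
    unfolding cyclohedron_polar_eq K_def[symmetric]
    using gauge_le_supp_H0 gauge_le_mono gauge_le_one_imp_mem[OF convex_K zero_mem_K] by blast
qed

lemma affinely_isomorphic_KR_polar: "affinely_isomorphic (KR n rho) (cyclohedron_polar n)"
proof -
  have "KR n rho \<subseteq> H0 n"
    unfolding KR_def using H0_unitv_diff H0_scaleR
    by (intro hull_minimal affine_imp_convex[OF affine_H0]) blast
  then have "affine hull KR n rho \<subseteq> H0 n" by (intro hull_minimal affine_H0)
  then have "inj_on antidiff (affine hull KR n rho)"
    using inj_on_antidiff by (rule inj_on_subset[rotated])
  then show ?thesis unfolding affinely_isomorphic_def
    by (intro exI[of _ antidiff] exI[of _ 0]) (simp add: linear_antidiff image_antidiff_KR)
qed

end

theorem mainTheorem12: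
  fixes n :: nat
  assumes "n \<ge> 3"
  shows "\<exists>\<rho>. quasi_metric_on n \<rho>
            \<and> affinely_isomorphic (KR n \<rho>) (cyclohedron_polar n)
            \<and> (\<forall>i<n. \<forall>j<n. \<forall>k<n. i \<noteq> j \<and> j \<noteq> k \<and> i \<noteq> k \<longrightarrow> \<rho> i k < \<rho> i j + \<rho> j k)"
proof -
  interpret cyclic_index n using assms by unfold_locales
  show ?thesis
    using quasi_metric_on_rho affinely_isomorphic_KR_polar rho_strict_triangle by blast
qed

end
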